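(* Let $(X,\to)$ be a transition system over $A$ (of arbitrary branching type). Then $\mathit{lo}_t$ is $c_t$-compatible, i.e. $\mathit{lo}_t(c_t(\mathcal S))\subseteq c_t(\mathit{lo}_t(\mathcal S))$ for every $\mathcal S\subseteq\mathcal P(X)$.
   Context: $\Diamond_a(S)=\{x\mid\exists x'\in S\colon x\xrightarrow{a}x'\}$; $\mathit{lo}_t(\mathcal S)=\bigcup_{a\in A}\{\Diamond_a(S)\mid S\in\mathcal S\}\cup\{X\}$. $\alpha_t(\mathcal S)=\{(X_1,X_2)\in\mathcal P(X)^2\mid\forall S\in\mathcal S\colon(X_1\cap S\neq\emptyset\iff X_2\cap S\neq\emptyset)\}$, $\gamma_t(R)=\{S\subseteq X\mid\forall(X_1,X_2)\in R\colon(X_1\cap S\neq\emptyset\iff X_2\cap S\neq\emptyset)\}$ for equivalences $R$ on $\mathcal P(X)$, and $c_t=\gamma_t\circ\alpha_t$. *)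

theory Defs
  imports Main
begin

text \<open>A transition system over label set A: carrier X, transition relation
  T \<subseteq> X \<times> A \<times> X (arbitrary branching, no finiteness assumptions).\<close>

definition diamond :: "'x set \<Rightarrow> ('x \<times> 'a \<times> 'x) set \<Rightarrow> 'a \<Rightarrow> 'x set \<Rightarrow> 'x set" where
  "diamond X T a S = {x \<in> X. \<exists>x' \<in> S. (x, a, x') \<in> T}"

definition lo_t :: "'x set \<Rightarrow> 'a set \<Rightarrow> ('x \<times> 'a \<times> 'x) set \<Rightarrow> 'x set set \<Rightarrow> 'x set set" where
  "lo_t X A T \<S> = (\<Union>a \<in> A. {diamond X T a S | S. S \<in> \<S>}) \<union> {X}"

definition alpha_t :: "'x set \<Rightarrow> 'x set set \<Rightarrow> ('x set \<times> 'x set) set" where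
  "alpha_t X \<S> = {(X1, X2). X1 \<subseteq> X \<and> X2 \<subseteq> X \<and>
     (\<forall>S \<in> \<S>. (X1 \<inter> S \<noteq> {} \<longleftrightarrow> X2 \<inter> S \<noteq> {}))}"

definition gamma_t :: "'x set \<Rightarrow> ('x set \<times> 'x set) set \<Rightarrow> 'x set set" where
  "gamma_t X R = {S. S \<subseteq> X \<and>
     (\<forall>(X1, X2) \<in> R. (X1 \<inter> S \<noteq> {} \<longleftrightarrow> X2 \<inter> S \<noteq> {}))}"

definition c_t :: "'x set \<Rightarrow> 'x set set \<Rightarrow> 'x set set" where
  "c_t X \<S> = gamma_t X (alpha_t X \<S>)"

end

theory Submission
  imports Defs
begin

text \<open>A set Y meets \<open>\<Diamond>\<^sub>a S\<close> iff its a-successor image meets S. Hence two sets that no set of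
  \<open>lo\<^sub>t(\<S>)\<close> distinguishes have a-successor images that no set of \<open>\<S>\<close>, and so no set of
  \<open>c\<^sub>t(\<S>)\<close>, distinguishes; this says precisely that \<open>\<Diamond>\<^sub>a S'\<close> lies in \<open>c\<^sub>t(lo\<^sub>t(\<S>))\<close>
  for every \<open>S' \<in> c\<^sub>t(\<S>)\<close>. The remaining generator X of \<open>lo\<^sub>t\<close> is covered because
  \<open>c\<^sub>t\<close> is extensive.\<close>

definition post :: "('x \<times> 'a \<times> 'x) set \<Rightarrow> 'a \<Rightarrow> 'x set \<Rightarrow> 'x set" where
  "post T a Y = {x'. \<exists>x \<in> Y. (x, a, x') \<in> T}"

lemma post_subset:
  assumes "T \<subseteq> X \<times> A \<times> X"
  shows "post T a Y \<subseteq> X"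
  using assms unfolding post_def by blast

lemma meets_diamond_iff_post_meets:
  assumes "Y \<subseteq> X"
  shows "Y \<inter> diamond X T a S \<noteq> {} \<longleftrightarrow> post T a Y \<inter> S \<noteq> {}"
  using assms unfolding post_def diamond_def by blast

lemma diamond_subset: "diamond X T a S \<subseteq> X"
  unfolding diamond_def by blast

lemma lo_t_subset_Pow: "lo_t X A T \<S> \<subseteq> Pow X"
  unfolding lo_t_def diamond_def by blast

lemma diamond_in_lo_t:
  assumes "a \<in> A" and "S \<in> \<S>"
  shows "diamond X T a S \<in> lo_t X A T \<S>"
  using assms unfolding lo_t_def by blast

lemma c_t_extensive:
  assumes "\<S> \<subseteq> Pow X"
  shows "\<S> \<subseteq> c_t X \<S>"
  using assms unfolding c_t_def gamma_t_def alpha_t_def by blast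

lemma c_t_meets_iff:
  assumes "S \<in> c_t X \<S>" and "(Y1, Y2) \<in> alpha_t X \<S>"
  shows "Y1 \<inter> S \<noteq> {} \<longleftrightarrow> Y2 \<inter> S \<noteq> {}"
  using assms unfolding c_t_def gamma_t_def by blast

lemma alpha_t_lo_t_post:
  assumes T: "T \<subseteq> X \<times> A \<times> X" and "a \<in> A"
    and R: "(X1, X2) \<in> alpha_t X (lo_t X A T \<S>)"
  shows "(post T a X1, post T a X2) \<in> alpha_t X \<S>"
proof -
  have sub: "X1 \<subseteq> X" "X2 \<subseteq> X"
    using R unfolding alpha_t_def by auto
  have "post T a X1 \<inter> S \<noteq> {} \<longleftrightarrow> post T a X2 \<inter> S \<noteq> {}" if "S \<in> \<S>" for S
  proof -
    have "X1 \<inter> diamond X T a S \<noteq> {} \<longleftrightarrow> X2 \<inter> diamond X T a S \<noteq> {}"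
      using R diamond_in_lo_t[OF \<open>a \<in> A\<close> that] unfolding alpha_t_def by auto
    then show ?thesis
      using meets_diamond_iff_post_meets[OF sub(1)] meets_diamond_iff_post_meets[OF sub(2)]
      by metis
  qed
  then show ?thesis
    unfolding alpha_t_def using post_subset[OF T] by auto
qed

lemma diamond_c_t_in_c_t_lo_t:
  assumes T: "T \<subseteq> X \<times> A \<times> X" and "a \<in> A" and S': "S' \<in> c_t X \<S>"
  shows "diamond X T a S' \<in> c_t X (lo_t X A T \<S>)"
proof -
  have "X1 \<inter> diamond X T a S' \<noteq> {} \<longleftrightarrow> X2 \<inter> diamond X T a S' \<noteq> {}"
    if R: "(X1, X2) \<in> alpha_t X (lo_t X A T \<S>)" for X1 X2
  proof -
    have "X1 \<subseteq> X" "X2 \<subseteq> X"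
      using R unfolding alpha_t_def by auto
    moreover have "post T a X1 \<inter> S' \<noteq> {} \<longleftrightarrow> post T a X2 \<inter> S' \<noteq> {}"
      using c_t_meets_iff[OF S' alpha_t_lo_t_post[OF T \<open>a \<in> A\<close> R]] .
    ultimately show ?thesis
      using meets_diamond_iff_post_meets by metis
  qed
  then show ?thesis
    unfolding c_t_def gamma_t_def using diamond_subset[of X T a S'] by blast
qed

theorem mainTheorem11:
  fixes X :: "'x set" and A :: "'a set" and T :: "('x \<times> 'a \<times> 'x) set"
    and \<S> :: "'x set set"
  assumes "T \<subseteq> X \<times> A \<times> X"
    and "\<S> \<subseteq> Pow X"
  shows "lo_t X A T (c_t X \<S>) \<subseteq> c_t X (lo_t X A T \<S>)"
proof
  fix D assume D: "D \<in> lo_t X A T (c_t X \<S>)"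
  have X_in: "X \<in> c_t X (lo_t X A T \<S>)"
    using c_t_extensive[OF lo_t_subset_Pow] unfolding lo_t_def by blast
  from D consider "D = X" | a S' where "a \<in> A" "S' \<in> c_t X \<S>" "D = diamond X T a S'"
    unfolding lo_t_def by blast
  then show "D \<in> c_t X (lo_t X A T \<S>)"
    using X_in diamond_c_t_in_c_t_lo_t[OF assms(1)] by cases auto
qed

end
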